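(* Let $\mathbf{E}\in\mathbb{K}^{m\times\sigma}$, $\mathbf{J}\in\mathbb{K}^{\sigma\times\sigma}$, $\mathbf{s}\in\mathbb{Z}^m$, and let $\boldsymbol{\delta}=(\delta_1,\dots,\delta_m)$ be the $\mathbf{s}$-minimal degree of $(\mathbf{E},\mathbf{J})$. Let $\delta=\lceil\sigma/m\rceil\ge1$; for $1\le i\le m$ write $\delta_i=(\alpha_i-1)\delta+\beta_i$ with $\alpha_i\ge1$ and $0\le\beta_i<\delta$, and let $\bar m=\alpha_1+\cdots+\alpha_m$. Define $\bar{\boldsymbol{\delta}}=(\underbrace{\delta,\dots,\delta,\beta_1}_{\alpha_1},\dots,\underbrace{\delta,\dots,\delta,\beta_m}_{\alpha_m})\in\mathbb{N}^{\bar m}$ and the block-diagonal matrix $\mathcal{E}\in\mathbb{K}[X]^{\bar m\times m}$ whose $i$-th diagonal block is the column $[1,X^{\delta},X^{2\delta},\dots,X^{(\alpha_i-1)\delta}]^{\mathsf T}$. Let $\mathbf{d}=-\bar{\boldsymbol{\delta}}\in\mathbb{Z}^{\bar m}$ and let $\mathbf{R}\in\mathbb{K}[X]^{\bar m\times\bar m}$ be a $\mathbf{d}$-minimal interpolation basis for $(\mathcal{E}\cdot\mathbf{E},\mathbf{J})$. Then the $\mathbf{s}$-Popov interpolation basis for $(\mathbf{E},\mathbf{J})$ is the submatrix of $\mathrm{lm}_{\mathbf{d}}(\mathbf{R})^{-1}\mathbf{R}\,\mathcal{E}$ formed by its rows at indices $\alpha_1+\cdots+\alpha_i$ for $1\le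 i\le m$.
   Context: For $p\in\mathbb{K}[X]$ and $\mathbf{e}\in\mathbb{K}^{1\times\sigma}$, $p\cdot\mathbf{e}=\mathbf{e}\,p(\mathbf{J})$; for a matrix $\mathbf{A}=[a_{ij}]\in\mathbb{K}[X]^{k\times m}$, $\mathbf{A}\cdot\mathbf{E}\in\mathbb{K}^{k\times\sigma}$ has $i$-th row $\sum_j a_{ij}\cdot\mathbf{e}_j$, $\mathbf{e}_j$ the rows of $\mathbf{E}$. An interpolant for $(\mathbf{E},\mathbf{J})$ is a row $\mathbf{p}$ with $\mathbf{p}\cdot\mathbf{E}=0$; an interpolation basis is a square matrix whose rows form a basis of the free module of interpolants. For a shift $\mathbf{s}$ (integer entries, possibly negative), the $\mathbf{s}$-degree of a nonzero row $[p_j]$ is $\max_j(\deg p_j+s_j)$; the $\mathbf{s}$-leading matrix $\mathrm{lm}_{\mathbf{s}}(\mathbf{P})$ of a full-rank $\mathbf{P}$ with row $\mathbf{s}$-degrees $d_i$ has $(i,j)$ entry the coefficient of degree $d_i-s_j$ of $p_{ij}$; $\mathbf{P}$ is $\mathbf{s}$-reduced if $\mathrm{lm}_{\mathbf{s}}(\mathbf{P})$ has full row rank; an $\mathbf{s}$-minimal interpolation basis is an $\mathbf{s}$-reduced interpolation basis. The $\mathbf{s}$-pivot index of a row is the largest $j$ attaining its $\mathbf{s}$-degree, $p_j$ its pivot entry. A nonsingular matrix is in $\mathbf{s}$-Popov form if its $\mathbf{s}$-pivot entries are monic and on the diagonal and in each column the nonpivot entries have degree less than the pivot entry. The $\mathbf{s}$-Popov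 interpolation basis is the unique interpolation basis in $\mathbf{s}$-Popov form; the $\mathbf{s}$-minimal degree is the tuple of degrees of its diagonal entries. *)

theory Defs
  imports "Jordan_Normal_Form.Gauss_Jordan_Elimination" "Jordan_Normal_Form.Determinant" "HOL-Computational_Algebra.Polynomial"
begin

definition poly_mat_eval :: "'a::field poly \<Rightarrow> 'a mat \<Rightarrow> 'a mat" where
  "poly_mat_eval p J = mat (dim_row J) (dim_col J)
     (\<lambda>(k,l). \<Sum>i\<le>degree p. coeff p i * (J ^\<^sub>m i) $$ (k,l))"

definition act :: "'a::field mat \<Rightarrow> 'a poly \<Rightarrow> 'a vec \<Rightarrow> 'a vec" where
  "act J p e = vec (dim_vec e) (\<lambda>l. \<Sum>k<dim_vec e. e $ k * poly_mat_eval p J $$ (k,l))"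

definition row_act :: "'a::field mat \<Rightarrow> 'a poly vec \<Rightarrow> 'a mat \<Rightarrow> 'a vec" where
  "row_act J p E = vec (dim_col E) (\<lambda>l. \<Sum>j<dim_row E. act J (p $ j) (row E j) $ l)"

definition mat_act :: "'a::field mat \<Rightarrow> 'a poly mat \<Rightarrow> 'a mat \<Rightarrow> 'a mat" where
  "mat_act J A E = mat (dim_row A) (dim_col E) (\<lambda>(i,l). row_act J (row A i) E $ l)"

definition interpolant :: "'a::field mat \<Rightarrow> 'a mat \<Rightarrow> 'a poly vec \<Rightarrow> bool" where
  "interpolant E J p \<longleftrightarrow> dim_vec p = dim_row E \<and> row_act J p E = 0\<^sub>v (dim_col E)"

definition interp_basis :: "'a::field mat \<Rightarrow> 'a mat \<Rightarrow> 'a poly mat \<Rightarrow> bool" where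
  "interp_basis E J P \<longleftrightarrow>
     P \<in> carrier_mat (dim_row E) (dim_row E) \<and>
     (\<forall>i<dim_row E. interpolant E J (row P i)) \<and>
     (\<forall>p. interpolant E J p \<longrightarrow>
        (\<exists>v. dim_vec v = dim_row E \<and> p = transpose_mat P *\<^sub>v v)) \<and>
     (\<forall>v. dim_vec v = dim_row E \<longrightarrow> transpose_mat P *\<^sub>v v = 0\<^sub>v (dim_row E)
        \<longrightarrow> v = 0\<^sub>v (dim_row E))"

definition rdeg :: "(nat \<Rightarrow> int) \<Rightarrow> 'a::zero poly vec \<Rightarrow> int" where
  "rdeg s p = Max {int (degree (p $ j)) + s j | j. j < dim_vec p \<and> p $ j \<noteq> 0}"

definition lm :: "(nat \<Rightarrow> int) \<Rightarrow> 'a::zero poly mat \<Rightarrow> 'a mat" where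
  "lm s P = mat (dim_row P) (dim_col P)
     (\<lambda>(i,j). if rdeg s (row P i) - s j < 0 then 0
              else coeff (P $$ (i,j)) (nat (rdeg s (row P i) - s j)))"

definition full_row_rank :: "'a::field mat \<Rightarrow> bool" where
  "full_row_rank M \<longleftrightarrow> (\<forall>v. dim_vec v = dim_row M \<longrightarrow>
      transpose_mat M *\<^sub>v v = 0\<^sub>v (dim_col M) \<longrightarrow> v = 0\<^sub>v (dim_row M))"

definition s_reduced :: "(nat \<Rightarrow> int) \<Rightarrow> 'a::field poly mat \<Rightarrow> bool" where
  "s_reduced s P \<longleftrightarrow> full_row_rank (lm s P)"

definition s_minimal_interp_basis ::
  "'a::field mat \<Rightarrow> 'a mat \<Rightarrow> (nat \<Rightarrow> int) \<Rightarrow> 'a poly mat \<Rightarrow> bool" where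
  "s_minimal_interp_basis E J s P \<longleftrightarrow> interp_basis E J P \<and> s_reduced s P"

definition pivot_index :: "(nat \<Rightarrow> int) \<Rightarrow> 'a::zero poly vec \<Rightarrow> nat" where
  "pivot_index s p = Max {j. j < dim_vec p \<and> p $ j \<noteq> 0 \<and> int (degree (p $ j)) + s j = rdeg s p}"

definition s_popov :: "(nat \<Rightarrow> int) \<Rightarrow> 'a::field poly mat \<Rightarrow> bool" where
  "s_popov s P \<longleftrightarrow> dim_row P = dim_col P \<and> det P \<noteq> 0 \<and>
     (\<forall>i<dim_row P. row P i \<noteq> 0\<^sub>v (dim_col P) \<and> pivot_index s (row P i) = i
         \<and> lead_coeff (P $$ (i,i)) = 1) \<and>
     (\<forall>i<dim_row P. \<forall>j<dim_row P. j \<noteq> i \<longrightarrow>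
         P $$ (j,i) = 0 \<or> degree (P $$ (j,i)) < degree (P $$ (i,i)))"

definition s_popov_interp_basis ::
  "'a::field mat \<Rightarrow> 'a mat \<Rightarrow> (nat \<Rightarrow> int) \<Rightarrow> 'a poly mat \<Rightarrow> bool" where
  "s_popov_interp_basis E J s P \<longleftrightarrow> interp_basis E J P \<and> s_popov s P"

definition s_minimal_degree ::
  "'a::field mat \<Rightarrow> 'a mat \<Rightarrow> (nat \<Rightarrow> int) \<Rightarrow> (nat \<Rightarrow> nat) \<Rightarrow> bool" where
  "s_minimal_degree E J s dlt \<longleftrightarrow> (\<exists>P. s_popov_interp_basis E J s P \<and>
      (\<forall>i<dim_row E. dlt i = degree (P $$ (i,i))))"

(* block structure: index k (0-based) of {0..<alpha_0+...+alpha_(m-1)} lies in block blk k,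
   at position pos k inside the block *)
definition blk :: "(nat \<Rightarrow> nat) \<Rightarrow> nat \<Rightarrow> nat" where
  "blk \<alpha> k = (LEAST i. k < (\<Sum>j<Suc i. \<alpha> j))"

definition pos :: "(nat \<Rightarrow> nat) \<Rightarrow> nat \<Rightarrow> nat" where
  "pos \<alpha> k = k - (\<Sum>j<blk \<alpha> k. \<alpha> j)"

definition Ecal :: "nat \<Rightarrow> (nat \<Rightarrow> nat) \<Rightarrow> nat \<Rightarrow> 'a::field poly mat" where
  "Ecal m \<alpha> d = mat (\<Sum>i<m. \<alpha> i) m
     (\<lambda>(k,j). if j = blk \<alpha> k then monom 1 (pos \<alpha> k * d) else 0)"

definition dbar :: "(nat \<Rightarrow> nat) \<Rightarrow> (nat \<Rightarrow> nat) \<Rightarrow> nat \<Rightarrow> nat \<Rightarrow> nat" where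
  "dbar \<alpha> \<beta> d k = (if pos \<alpha> k = \<alpha> (blk \<alpha> k) - 1 then \<beta> (blk \<alpha> k) else d)"

end

theory Submission
  imports Defs
begin

(* Write each s-minimal degree as dlt i = (alpha i - 1) d + beta i and cut every column of an
   interpolant into alpha i digits in base X^d; collapse (multiplication by Ecal) glues them back.
   Cutting the rows of the s-Popov basis P in this way, and adding the carries X^d e_k - e_(k+1),
   yields for every k an interpolant of (Ecal E, J) of (-dbar)-degree 0 whose (-dbar)-leading
   vector is the k-th unit vector. By the predictable degree property, these force every row of
   the (-dbar)-reduced basis R to have (-dbar)-degree 0 and its leading matrix L to be invertible,
   so L^-1 R has (-dbar)-leading matrix the identity. Collapsing the row of L^-1 R at the
   last position of block i gives an interpolant whose coefficients of degree at least dlt j in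
   column j agree with those of row i of P; the difference lies below the s-minimal degrees,
   hence vanishes. *)

section \<open>Evaluating polynomials at a matrix\<close>

lemma poly_mat_eval_carrier: "J \<in> carrier_mat n n \<Longrightarrow> poly_mat_eval p J \<in> carrier_mat n n"
  unfolding poly_mat_eval_def by auto

lemma dim_poly_mat_eval [simp]:
  "dim_row (poly_mat_eval p J) = dim_row J" "dim_col (poly_mat_eval p J) = dim_col J"
  unfolding poly_mat_eval_def by auto

lemma poly_mat_eval_index:
  assumes J: "J \<in> carrier_mat n n" and k: "k < n" and l: "l < n" and N: "degree p \<le> N"
  shows "poly_mat_eval p J $$ (k,l) = (\<Sum>i\<le>N. coeff p i * (J ^\<^sub>m i) $$ (k,l))"
proof -
  have "poly_mat_eval p J $$ (k,l) = (\<Sum>i\<le>degree p. coeff p i * (J ^\<^sub>m i) $$ (k,l))"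
    using J k l unfolding poly_mat_eval_def by auto
  also have "\<dots> = (\<Sum>i\<le>N. coeff p i * (J ^\<^sub>m i) $$ (k,l))"
    by (rule sum.mono_neutral_left) (use N in \<open>auto simp: coeff_eq_0\<close>)
  finally show ?thesis .
qed

lemma poly_mat_eval_add:
  assumes J: "J \<in> carrier_mat n n"
  shows "poly_mat_eval (p + q) J = poly_mat_eval p J + poly_mat_eval q J"
proof (rule eq_matI)
  fix k l assume "k < dim_row (poly_mat_eval p J + poly_mat_eval q J)"
    and "l < dim_col (poly_mat_eval p J + poly_mat_eval q J)"
  with J have k: "k < n" and l: "l < n" by auto
  let ?N = "max (degree p) (degree q)"
  have "degree (p + q) \<le> ?N" by (rule degree_add_le) auto
  then show "poly_mat_eval (p + q) J $$ (k, l) = (poly_mat_eval p J + poly_mat_eval q J) $$ (k, l)"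
    using J k l by (simp add: poly_mat_eval_index[OF J k l, of _ ?N] algebra_simps sum.distrib)
qed (use J in auto)

lemma poly_mat_eval_smult:
  assumes J: "J \<in> carrier_mat n n"
  shows "poly_mat_eval (smult a p) J = a \<cdot>\<^sub>m poly_mat_eval p J"
proof (rule eq_matI)
  fix k l assume "k < dim_row (a \<cdot>\<^sub>m poly_mat_eval p J)" and "l < dim_col (a \<cdot>\<^sub>m poly_mat_eval p J)"
  with J have k: "k < n" and l: "l < n" by auto
  show "poly_mat_eval (smult a p) J $$ (k, l) = (a \<cdot>\<^sub>m poly_mat_eval p J) $$ (k, l)"
    using J k l by (simp add: poly_mat_eval_index[OF J k l, of _ "degree p"] sum_distrib_left mult.assoc)
qed (use J in auto)

lemma poly_mat_eval_0: "J \<in> carrier_mat n n \<Longrightarrow> poly_mat_eval 0 J = 0\<^sub>m n n"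
  unfolding poly_mat_eval_def by (auto intro!: eq_matI)

lemma poly_mat_eval_pCons:
  assumes J: "J \<in> carrier_mat n n"
  shows "poly_mat_eval (pCons a p) J = a \<cdot>\<^sub>m 1\<^sub>m n + poly_mat_eval p J * J"
proof (rule eq_matI)
  fix k l assume "k < dim_row (a \<cdot>\<^sub>m 1\<^sub>m n + poly_mat_eval p J * J)"
    and "l < dim_col (a \<cdot>\<^sub>m 1\<^sub>m n + poly_mat_eval p J * J)"
  with J have k: "k < n" and l: "l < n" by auto
  have "poly_mat_eval (pCons a p) J $$ (k,l)
      = (\<Sum>i\<le>Suc (degree p). coeff (pCons a p) i * (J ^\<^sub>m i) $$ (k,l))"
    by (rule poly_mat_eval_index[OF J k l]) (simp add: degree_pCons_le)
  also have "\<dots> = a * (1\<^sub>m n) $$ (k,l) + (\<Sum>i\<le>degree p. coeff p i * (J ^\<^sub>m Suc i) $$ (k,l))"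
    by (subst sum.atMost_Suc_shift) (use k l J in simp)
  also have "(\<Sum>i\<le>degree p. coeff p i * (J ^\<^sub>m Suc i) $$ (k,l))
      = (\<Sum>t<n. \<Sum>i\<le>degree p. coeff p i * ((J ^\<^sub>m i) $$ (k,t) * J $$ (t,l)))"
    using J k l by (subst sum.swap)
      (auto intro!: sum.cong simp: scalar_prod_def sum_distrib_left row_def col_def)
  also have "\<dots> = (poly_mat_eval p J * J) $$ (k,l)"
    using J k l by (simp add: poly_mat_eval_index[OF J k _ order.refl] sum_distrib_right mult.assoc
        scalar_prod_def row_def col_def atLeast0LessThan)
  finally show "poly_mat_eval (pCons a p) J $$ (k, l) = (a \<cdot>\<^sub>m 1\<^sub>m n + poly_mat_eval p J * J) $$ (k, l)"
    using J k l by simp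
qed (use J in auto)

lemma poly_mat_eval_mult:
  assumes J: "J \<in> carrier_mat n n"
  shows "poly_mat_eval (p * q) J = poly_mat_eval p J * poly_mat_eval q J"
proof (induction q rule: pCons_induct)
  case 0
  show ?case
    using J by (simp add: poly_mat_eval_0 right_mult_zero_mat[OF poly_mat_eval_carrier[OF J]])
next
  case (pCons a q)
  let ?A = "poly_mat_eval p J" and ?B = "poly_mat_eval q J"
  have A: "?A \<in> carrier_mat n n" and B: "?B \<in> carrier_mat n n"
    using poly_mat_eval_carrier[OF J] by auto
  have zero: "0 \<cdot>\<^sub>m 1\<^sub>m n + ?A * ?B * J = ?A * ?B * J"
    using A B J by (intro eq_matI) simp_all
  have "p * pCons a q = smult a p + pCons 0 (p * q)" by simp
  then have "poly_mat_eval (p * pCons a q) J = a \<cdot>\<^sub>m ?A + ?A * ?B * J"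
    using J by (simp only: poly_mat_eval_add poly_mat_eval_smult poly_mat_eval_pCons pCons.IH zero)
  also have "\<dots> = ?A * (a \<cdot>\<^sub>m 1\<^sub>m n + ?B * J)"
    by (simp only: mult_add_distrib_mat[OF A smult_carrier_mat[OF one_carrier_mat] mult_carrier_mat[OF B J]]
        mult_smult_distrib[OF A one_carrier_mat] right_mult_one_mat[OF A] assoc_mult_mat[OF A B J])
  finally show ?case by (simp only: poly_mat_eval_pCons[OF J])
qed

lemma poly_mat_eval_sum_index:
  assumes J: "J \<in> carrier_mat n n" and k: "k < n" and l: "l < n" and I: "finite I"
  shows "poly_mat_eval (\<Sum>i\<in>I. f i) J $$ (k,l) = (\<Sum>i\<in>I. poly_mat_eval (f i) J $$ (k,l))"
  using I by induction (use J k l in \<open>simp_all add: poly_mat_eval_0 poly_mat_eval_add\<close>)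

lemma poly_mat_eval_mult_index:
  assumes J: "J \<in> carrier_mat n n" and k: "k < n" and l: "l < n"
  shows "poly_mat_eval (p * q) J $$ (k,l)
    = (\<Sum>t<n. poly_mat_eval p J $$ (k,t) * poly_mat_eval q J $$ (t,l))"
  using J k l by (simp add: poly_mat_eval_mult scalar_prod_def row_def col_def atLeast0LessThan)

lemma poly_mat_eval_diff_index:
  assumes J: "J \<in> carrier_mat n n" and k: "k < n" and l: "l < n"
  shows "poly_mat_eval (p - q) J $$ (k,l) = poly_mat_eval p J $$ (k,l) - poly_mat_eval q J $$ (k,l)"
  using poly_mat_eval_add[OF J, of "p - q" q] J k l by (simp add: eq_diff_eq)

section \<open>The action of polynomial matrices\<close>

lemma dim_row_act [simp]: "dim_vec (row_act J q E) = dim_col E"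
  unfolding row_act_def by simp

lemma row_act_index:
  "l < dim_col E \<Longrightarrow> row_act J q E $ l
    = (\<Sum>j<dim_row E. \<Sum>k<dim_col E. E $$ (j,k) * poly_mat_eval (q $ j) J $$ (k,l))"
  unfolding row_act_def act_def by (simp add: row_def)

lemma mat_act_carrier: "mat_act J A E \<in> carrier_mat (dim_row A) (dim_col E)"
  unfolding mat_act_def by simp

lemma mat_act_index:
  "i < dim_row A \<Longrightarrow> l < dim_col E \<Longrightarrow> mat_act J A E $$ (i,l) = row_act J (row A i) E $ l"
  unfolding mat_act_def by simp

lemma index_transpose_mult_vec:
  "B \<in> carrier_mat K K' \<Longrightarrow> j < K' \<Longrightarrow> dim_vec u = K \<Longrightarrow>
    (transpose_mat B *\<^sub>v u) $ j = (\<Sum>i<K. B $$ (i,j) * u $ i)"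
  by (simp add: scalar_prod_def atLeast0LessThan)

text \<open>\<open>transpose_mat A *\<^sub>v u\<close> is the row vector \<open>u A\<close>: the action is associative.\<close>
lemma row_act_mat_act:
  assumes J: "J \<in> carrier_mat n n" and A: "A \<in> carrier_mat K m" and E: "E \<in> carrier_mat m n"
    and u: "dim_vec u = K"
  shows "row_act J (transpose_mat A *\<^sub>v u) E = row_act J u (mat_act J A E)"
proof (rule eq_vecI)
  fix l assume "l < dim_vec (row_act J u (mat_act J A E))"
  then have l: "l < n" using E by (simp add: mat_act_def)
  define F where "F j k i t = E $$ (j,k) * (poly_mat_eval (A $$ (i,j)) J $$ (k,t)
    * poly_mat_eval (u $ i) J $$ (t,l))" for j k i t
  have "row_act J (transpose_mat A *\<^sub>v u) E $ l = (\<Sum>j<m. \<Sum>k<n. \<Sum>i<K. \<Sum>t<n. F j k i t)"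
  proof -
    have "poly_mat_eval ((transpose_mat A *\<^sub>v u) $ j) J $$ (k,l)
        = (\<Sum>i<K. \<Sum>t<n. poly_mat_eval (A $$ (i,j)) J $$ (k,t) * poly_mat_eval (u $ i) J $$ (t,l))"
      if "j < m" "k < n" for j k
      using that u l unfolding index_transpose_mult_vec[OF A that(1) u]
      by (simp add: poly_mat_eval_sum_index[OF J] poly_mat_eval_mult_index[OF J])
    then show ?thesis
      using E l by (simp add: row_act_index F_def sum_distrib_left)
  qed
  also have "\<dots> = (\<Sum>j<m. \<Sum>i<K. \<Sum>k<n. \<Sum>t<n. F j k i t)"
    by (rule sum.cong[OF refl], rule sum.swap)
  also have "\<dots> = (\<Sum>i<K. \<Sum>j<m. \<Sum>t<n. \<Sum>k<n. F j k i t)"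
    by (subst sum.swap) (rule sum.cong[OF refl], rule sum.cong[OF refl], rule sum.swap)
  also have "\<dots> = (\<Sum>i<K. \<Sum>t<n. \<Sum>j<m. \<Sum>k<n. F j k i t)"
    by (rule sum.cong[OF refl], rule sum.swap)
  also have "\<dots> = row_act J u (mat_act J A E) $ l"
  proof -
    have "mat_act J A E $$ (i,t) = (\<Sum>j<m. \<Sum>k<n. E $$ (j,k) * poly_mat_eval (A $$ (i,j)) J $$ (k,t))"
      if "i < K" "t < n" for i t
      using that A E by (simp add: mat_act_index row_act_index)
    then show ?thesis
      using A E l by (simp add: row_act_index mat_act_def F_def sum_distrib_right mult.assoc)
  qed
  finally show "row_act J (transpose_mat A *\<^sub>v u) E $ l = row_act J u (mat_act J A E) $ l" .
qed (use A E in \<open>simp add: mat_act_def\<close>)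

lemma row_act_diff:
  assumes J: "J \<in> carrier_mat n n" and E: "E \<in> carrier_mat m n"
    and p: "dim_vec p = m" and q: "dim_vec q = m"
  shows "row_act J (p - q) E = row_act J p E - row_act J q E"
  by (rule eq_vecI)
    (use E p q in \<open>simp_all add: row_act_index poly_mat_eval_diff_index[OF J] algebra_simps sum_subtractf\<close>)

lemma row_act_mat_act_eq_0:
  assumes "\<And>i. i < dim_row A \<Longrightarrow> row_act J (row A i) E = 0\<^sub>v (dim_col E)"
  shows "row_act J u (mat_act J A E) = 0\<^sub>v (dim_col E)"
  using assms by (intro eq_vecI) (simp_all add: row_act_index mat_act_def)

lemma interpolant_0:
  assumes "J \<in> carrier_mat n n" and "E \<in> carrier_mat m n"
  shows "interpolant E J (0\<^sub>v m)"
  using assms unfolding interpolant_def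
  by (auto intro!: eq_vecI simp: row_act_index poly_mat_eval_0)

section \<open>Leading coefficients and the predictable degree property\<close>

lemma vec_nonzero_index: "v \<noteq> 0\<^sub>v n \<Longrightarrow> dim_vec v = n \<Longrightarrow> \<exists>i<n. v $ i \<noteq> 0"
  by (rule ccontr) (auto intro!: eq_vecI)

text \<open>For row shifts \<open>r\<close> and column shifts \<open>w\<close> with \<open>deg B\<^sub>i\<^sub>j \<le> r\<^sub>i + w\<^sub>j\<close>, this is the
  \<open>(-w)\<close>-leading matrix of \<open>B\<close> when row \<open>i\<close> has \<open>(-w)\<close>-degree \<open>r\<^sub>i\<close>.\<close>
definition leading_coeff_mat :: "(nat \<Rightarrow> nat) \<Rightarrow> (nat \<Rightarrow> nat) \<Rightarrow> 'a::zero poly mat \<Rightarrow> 'a mat" where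
  "leading_coeff_mat r w B = mat (dim_row B) (dim_col B) (\<lambda>(i,j). coeff (B $$ (i,j)) (r i + w j))"

lemma rdeg_ge:
  assumes "j < dim_vec p" and "p $ j \<noteq> 0"
  shows "int (degree (p $ j)) + s j \<le> rdeg s p"
  using assms unfolding rdeg_def by (intro Max_ge) auto

lemma lm_index:
  "i < dim_row P \<Longrightarrow> j < dim_col P \<Longrightarrow> lm s P $$ (i,j) = (if rdeg s (row P i) - s j < 0 then 0
    else coeff (P $$ (i,j)) (nat (rdeg s (row P i) - s j)))"
  unfolding lm_def by simp

lemma coeff_mult_degree_bounds:
  fixes p q :: "'a::idom poly"
  assumes "degree p \<le> a" "degree q \<le> b"
  shows "coeff (p * q) (a + b) = coeff p a * coeff q b"
proof (cases "degree p = a \<and> degree q = b")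
  case True
  then show ?thesis using coeff_mult_degree_sum[of p q] by simp
next
  case False
  then have "degree p < a \<or> degree q < b" using assms by auto
  moreover from this have "degree (p * q) < a + b" using degree_mult_le[of p q] assms by linarith
  ultimately show ?thesis by (auto simp: coeff_eq_0)
qed

lemma coeff_transpose_mult_vec_shifted:
  fixes B :: "'a::idom poly mat"
  assumes B: "B \<in> carrier_mat K K'" and u: "dim_vec u = K" and j: "j < K'"
    and deg: "\<And>i. i < K \<Longrightarrow> degree (B $$ (i,j)) \<le> r i + w j"
    and t: "\<And>i. i < K \<Longrightarrow> u $ i \<noteq> 0 \<Longrightarrow> degree (u $ i) + r i \<le> t"
  shows "degree ((transpose_mat B *\<^sub>v u) $ j) \<le> t + w j"
    and "coeff ((transpose_mat B *\<^sub>v u) $ j) (t + w j) = (transpose_mat (leading_coeff_mat r w B)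
      *\<^sub>v vec K (\<lambda>i. if r i \<le> t then coeff (u $ i) (t - r i) else 0)) $ j"
proof -
  have summand: "degree (B $$ (i,j) * u $ i) \<le> t + w j \<and> coeff (B $$ (i,j) * u $ i) (t + w j)
      = coeff (B $$ (i,j)) (r i + w j) * (if r i \<le> t then coeff (u $ i) (t - r i) else 0)"
    if i: "i < K" for i
  proof (cases "u $ i = 0")
    case False
    then have rt: "r i \<le> t" and du: "degree (u $ i) \<le> t - r i" using t[OF i] by auto
    then have split: "t + w j = (r i + w j) + (t - r i)" by simp
    have "degree (B $$ (i,j) * u $ i) \<le> t + w j"
      using degree_mult_le[of "B $$ (i,j)" "u $ i"] deg[OF i] du rt by linarith
    moreover have "coeff (B $$ (i,j) * u $ i) (t + w j) = coeff (B $$ (i,j)) (r i + w j) * coeff (u $ i) (t - r i)"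
      unfolding split by (rule coeff_mult_degree_bounds[OF deg[OF i] du])
    ultimately show ?thesis using rt by simp
  qed simp
  show "degree ((transpose_mat B *\<^sub>v u) $ j) \<le> t + w j"
    unfolding index_transpose_mult_vec[OF B j u] by (rule degree_sum_le) (use summand in auto)
  have L: "leading_coeff_mat r w B \<in> carrier_mat K K'" using B unfolding leading_coeff_mat_def by simp
  show "coeff ((transpose_mat B *\<^sub>v u) $ j) (t + w j) = (transpose_mat (leading_coeff_mat r w B)
      *\<^sub>v vec K (\<lambda>i. if r i \<le> t then coeff (u $ i) (t - r i) else 0)) $ j"
    unfolding index_transpose_mult_vec[OF B j u] coeff_sum index_transpose_mult_vec[OF L j dim_vec]
    using summand B j by (intro sum.cong) (simp_all add: leading_coeff_mat_def)
qed

text \<open>The predictable degree property; \<open>c\<close> collects the coefficients of \<open>u\<close> that reach the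
  maximal degree \<open>t\<close>.\<close>
lemma leading_coeffs_transpose_mult_vec:
  fixes B :: "'a::field poly mat"
  assumes B: "B \<in> carrier_mat K K'" and u: "dim_vec u = K" and u0: "u \<noteq> 0\<^sub>v K"
    and deg: "\<And>i j. i < K \<Longrightarrow> j < K' \<Longrightarrow> degree (B $$ (i,j)) \<le> r i + w j"
  obtains t c where "dim_vec c = K" "c \<noteq> 0\<^sub>v K" "\<And>i. i < K \<Longrightarrow> c $ i \<noteq> 0 \<Longrightarrow> r i \<le> t"
    "\<And>j. j < K' \<Longrightarrow> degree ((transpose_mat B *\<^sub>v u) $ j) \<le> t + w j"
    "\<And>j. j < K' \<Longrightarrow> coeff ((transpose_mat B *\<^sub>v u) $ j) (t + w j)
        = (transpose_mat (leading_coeff_mat r w B) *\<^sub>v c) $ j"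
proof -
  define T where "T = {degree (u $ i) + r i | i. i < K \<and> u $ i \<noteq> 0}"
  obtain i1 where "i1 < K" "u $ i1 \<noteq> 0" using vec_nonzero_index[OF u0 u] by blast
  then have fin: "finite T" and ne: "T \<noteq> {}" unfolding T_def by auto
  define t where "t = Max T"
  have t: "degree (u $ i) + r i \<le> t" if "i < K" "u $ i \<noteq> 0" for i
    unfolding t_def using fin that by (auto intro!: Max_ge simp: T_def)
  have "t \<in> T" unfolding t_def using fin ne by (rule Max_in)
  then obtain i0 where i0: "i0 < K" "u $ i0 \<noteq> 0" "degree (u $ i0) + r i0 = t"
    unfolding T_def by blast
  define c where "c = vec K (\<lambda>i. if r i \<le> t then coeff (u $ i) (t - r i) else 0)"
  have "c $ i0 = lead_coeff (u $ i0)" using i0 unfolding c_def by auto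
  then have c0: "c \<noteq> 0\<^sub>v K" using i0 by auto
  have deg_col: "\<And>i. i < K \<Longrightarrow> degree (B $$ (i,j)) \<le> r i + w j" if "j < K'" for j
    using deg that by blast
  have lead: "coeff ((transpose_mat B *\<^sub>v u) $ j) (t + w j)
      = (transpose_mat (leading_coeff_mat r w B) *\<^sub>v c) $ j" if j: "j < K'" for j
    unfolding c_def by (rule coeff_transpose_mult_vec_shifted(2)[where r = r and w = w, OF B u j deg_col[OF j] t])
  have degree: "degree ((transpose_mat B *\<^sub>v u) $ j) \<le> t + w j" if j: "j < K'" for j
    by (rule coeff_transpose_mult_vec_shifted(1)[where r = r and w = w, OF B u j deg_col[OF j] t])
  show ?thesis
  proof (rule that[of c t])
    show "dim_vec c = K" by (simp add: c_def)
    show "r i \<le> t" if "i < K" "c $ i \<noteq> 0" for i using that by (simp add: c_def split: if_splits)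
  qed (fact c0 degree lead)+
qed

section \<open>Interpolation bases in shifted Popov form\<close>

lemma s_popov_column_coeffs:
  assumes P: "s_popov s P" and i: "i < dim_row P" and j: "j < dim_row P"
  shows "degree (P $$ (i,j)) \<le> degree (P $$ (j,j))"
    and "coeff (P $$ (i,j)) (degree (P $$ (j,j))) = (if i = j then 1 else 0)"
proof -
  have "i \<noteq> j \<Longrightarrow> P $$ (i,j) = 0 \<or> degree (P $$ (i,j)) < degree (P $$ (j,j))"
    and "lead_coeff (P $$ (j,j)) = 1"
    using P i j unfolding s_popov_def by auto
  then show "degree (P $$ (i,j)) \<le> degree (P $$ (j,j))"
    and "coeff (P $$ (i,j)) (degree (P $$ (j,j))) = (if i = j then 1 else 0)"
    by (cases "i = j"; auto simp: coeff_eq_0)+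
qed

lemma s_popov_interp_basis_carrier:
  "s_popov_interp_basis E J s P \<Longrightarrow> P \<in> carrier_mat (dim_row E) (dim_row E)"
  unfolding s_popov_interp_basis_def interp_basis_def by auto

lemma interpolant_eq_0_if_below_popov_degrees:
  assumes P: "s_popov_interp_basis E J s P" and p: "interpolant E J p"
    and low: "\<And>j n. j < dim_row E \<Longrightarrow> degree (P $$ (j,j)) \<le> n \<Longrightarrow> coeff (p $ j) n = 0"
  shows "p = 0\<^sub>v (dim_row E)"
proof (rule ccontr)
  let ?m = "dim_row E" and ?w = "\<lambda>j. degree (P $$ (j,j))"
  assume p0: "p \<noteq> 0\<^sub>v ?m"
  have Pc: "P \<in> carrier_mat ?m ?m" by (rule s_popov_interp_basis_carrier[OF P])
  have pop: "s_popov s P" using P unfolding s_popov_interp_basis_def by simp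
  obtain v where v: "dim_vec v = ?m" "p = transpose_mat P *\<^sub>v v"
    using P p unfolding s_popov_interp_basis_def interp_basis_def by blast
  have v0: "v \<noteq> 0\<^sub>v ?m"
  proof
    assume "v = 0\<^sub>v ?m"
    then have "p = 0\<^sub>v ?m" using Pc unfolding v(2) by (intro eq_vecI) (simp_all add: index_transpose_mult_vec)
    with p0 show False ..
  qed
  have L: "leading_coeff_mat (\<lambda>_. 0) ?w P = 1\<^sub>m ?m"
    using Pc s_popov_column_coeffs(2)[OF pop] by (intro eq_matI) (auto simp: leading_coeff_mat_def)
  show False
  proof (rule leading_coeffs_transpose_mult_vec[OF Pc v(1) v0, where r = "\<lambda>_. 0" and w = ?w])
    show "degree (P $$ (i,j)) \<le> 0 + ?w j" if "i < ?m" "j < ?m" for i j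
      using s_popov_column_coeffs(1)[OF pop] Pc that by simp
    fix t c assume c: "dim_vec c = ?m" "c \<noteq> 0\<^sub>v ?m"
      and lead: "\<And>j. j < ?m \<Longrightarrow> coeff ((transpose_mat P *\<^sub>v v) $ j) (t + ?w j)
        = (transpose_mat (leading_coeff_mat (\<lambda>_. 0) ?w P) *\<^sub>v c) $ j"
    obtain j where j: "j < ?m" "c $ j \<noteq> 0" using vec_nonzero_index[OF c(2,1)] by blast
    have "coeff (p $ j) (t + ?w j) = (transpose_mat (1\<^sub>m ?m) *\<^sub>v c) $ j"
      using lead[OF j(1)] unfolding v(2) L .
    also have "\<dots> = c $ j" using c(1) by (simp only: transpose_one one_mult_mat_vec[OF carrier_vecI])
    finally show False using low[OF j(1)] j(2) by simp
  qed
qed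

lemma s_popov_interp_basis_eqI:
  assumes E: "E \<in> carrier_mat m \<sigma>" and J: "J \<in> carrier_mat \<sigma> \<sigma>"
    and P: "s_popov_interp_basis E J s P" and S: "S \<in> carrier_mat m m"
    and S_int: "\<And>i. i < m \<Longrightarrow> interpolant E J (row S i)"
    and S_coeff: "\<And>i j n. i < m \<Longrightarrow> j < m \<Longrightarrow> degree (P $$ (j,j)) \<le> n \<Longrightarrow>
        coeff (S $$ (i,j)) n = (if n = degree (P $$ (j,j)) \<and> i = j then 1 else 0)"
  shows "S = P"
proof -
  have Pc: "P \<in> carrier_mat m m" using s_popov_interp_basis_carrier[OF P] E by simp
  have pop: "s_popov s P" using P unfolding s_popov_interp_basis_def by simp
  show ?thesis
  proof (rule eq_matI)
  fix i j assume "i < dim_row P" "j < dim_col P"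
  then have i: "i < m" and j: "j < m" using Pc by auto
  have "interpolant E J (row P i)"
    using P E i unfolding s_popov_interp_basis_def interp_basis_def by auto
  then have "interpolant E J (row S i - row P i)"
    using S_int[OF i] row_act_diff[OF J E] S Pc E by (simp add: interpolant_def)
  moreover have "coeff ((row S i - row P i) $ j') n = 0"
    if j': "j' < m" and n: "degree (P $$ (j',j')) \<le> n" for j' n
    using s_popov_column_coeffs[OF pop, of i j'] S_coeff[OF i j' n] i j' n S Pc
    by (cases "n = degree (P $$ (j',j'))") (auto simp: coeff_eq_0)
  ultimately have "row S i - row P i = 0\<^sub>v m"
    using interpolant_eq_0_if_below_popov_degrees[OF P] E by auto
  then have "(row S i - row P i) $ j = 0" using j by simp
  then show "S $$ (i,j) = P $$ (i,j)" using i j S Pc by simp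
  qed (use S Pc in auto)
qed

section \<open>Block indexing\<close>

definition blk_start :: "(nat \<Rightarrow> nat) \<Rightarrow> nat \<Rightarrow> nat" where
  "blk_start \<alpha> i = (\<Sum>j<i. \<alpha> j)"

lemma blk_start_Suc: "blk_start \<alpha> (Suc i) = blk_start \<alpha> i + \<alpha> i"
  unfolding blk_start_def by simp

lemma blk_start_mono: "i \<le> j \<Longrightarrow> blk_start \<alpha> i \<le> blk_start \<alpha> j"
  unfolding blk_start_def by (rule sum_mono2) auto

lemma blk_pos_blk_start_add:
  assumes p: "p < \<alpha> i"
  shows "blk \<alpha> (blk_start \<alpha> i + p) = i" and "pos \<alpha> (blk_start \<alpha> i + p) = p"
proof -
  show b: "blk \<alpha> (blk_start \<alpha> i + p) = i"
    unfolding blk_def blk_start_def[symmetric]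
  proof (rule Least_equality)
    show "blk_start \<alpha> i + p < blk_start \<alpha> (Suc i)" using p by (simp add: blk_start_Suc)
    fix i' assume "blk_start \<alpha> i + p < blk_start \<alpha> (Suc i')"
    then show "i \<le> i'" using blk_start_mono[of "Suc i'" i \<alpha>] by (cases "Suc i' \<le> i") auto
  qed
  show "pos \<alpha> (blk_start \<alpha> i + p) = p" unfolding pos_def b by (simp add: blk_start_def)
qed

lemma blk_start_add_less: "i < m \<Longrightarrow> p < \<alpha> i \<Longrightarrow> blk_start \<alpha> i + p < blk_start \<alpha> m"
  using blk_start_mono[of "Suc i" m \<alpha>] by (simp add: blk_start_Suc)

lemma
  assumes k: "k < blk_start \<alpha> m"
  shows blk_less: "blk \<alpha> k < m"
    and blk_start_add_pos: "blk_start \<alpha> (blk \<alpha> k) + pos \<alpha> k = k"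
    and pos_less: "pos \<alpha> k < \<alpha> (blk \<alpha> k)"
proof -
  have ex: "k < blk_start \<alpha> (Suc (m - 1))" using k by (cases m) (auto simp: blk_start_def)
  have lt: "k < blk_start \<alpha> (Suc (blk \<alpha> k))"
    unfolding blk_def blk_start_def[symmetric] by (rule LeastI[of "\<lambda>i. k < blk_start \<alpha> (Suc i)", OF ex])
  have "blk \<alpha> k \<le> m - 1"
    unfolding blk_def blk_start_def[symmetric] by (rule Least_le[of "\<lambda>i. k < blk_start \<alpha> (Suc i)", OF ex])
  then show "blk \<alpha> k < m" using k by (cases m) (auto simp: blk_start_def)
  have ge: "blk_start \<alpha> (blk \<alpha> k) \<le> k"
  proof (cases "blk \<alpha> k")
    case (Suc b)
    then have "\<not> k < blk_start \<alpha> (Suc b)"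
      using not_less_Least[of b "\<lambda>i. k < blk_start \<alpha> (Suc i)"]
      unfolding blk_def blk_start_def[symmetric] by auto
    then show ?thesis using Suc by simp
  qed (simp add: blk_start_def)
  then show "blk_start \<alpha> (blk \<alpha> k) + pos \<alpha> k = k"
    unfolding pos_def blk_start_def[symmetric] by simp
  then show "pos \<alpha> k < \<alpha> (blk \<alpha> k)" using lt by (simp add: blk_start_Suc)
qed

section \<open>Partial linearization\<close>

text \<open>\<open>q\<close> has \<open>(-w)\<close>-degree \<open>0\<close> and its \<open>(-w)\<close>-leading vector is the \<open>k\<close>-th unit vector.\<close>
definition unit_leading :: "(nat \<Rightarrow> nat) \<Rightarrow> nat \<Rightarrow> 'a::zero_neq_one poly vec \<Rightarrow> bool" where
  "unit_leading w k q \<longleftrightarrow>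
    (\<forall>j<dim_vec q. degree (q $ j) \<le> w j \<and> coeff (q $ j) (w j) = (if j = k then 1 else 0))"

locale partial_linearization =
  fixes E J :: "'a::field mat" and s :: "nat \<Rightarrow> int" and dlt \<alpha> \<beta> :: "nat \<Rightarrow> nat" and m \<sigma> d :: nat
    and P :: "'a poly mat"
  assumes E: "E \<in> carrier_mat m \<sigma>" and J: "J \<in> carrier_mat \<sigma> \<sigma>" and d_pos: "d \<ge> 1"
    and decomp: "\<forall>i<m. 1 \<le> \<alpha> i \<and> \<beta> i < d \<and> dlt i = (\<alpha> i - 1) * d + \<beta> i"
    and P: "s_popov_interp_basis E J s P"
    and P_degrees: "\<forall>i<m. dlt i = degree (P $$ (i,i))"
begin

abbreviation "N \<equiv> blk_start \<alpha> m"
abbreviation "Ec \<equiv> Ecal m \<alpha> d :: 'a poly mat"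
abbreviation "w \<equiv> dbar \<alpha> \<beta> d"

definition collapse :: "'a poly vec \<Rightarrow> 'a poly vec" where
  "collapse q = transpose_mat Ec *\<^sub>v q"

definition block_last :: "nat \<Rightarrow> nat" where
  "block_last i = blk_start \<alpha> i + (\<alpha> i - 1)"

lemma decomp_at: "i < m \<Longrightarrow> 1 \<le> \<alpha> i \<and> \<beta> i < d \<and> dlt i = (\<alpha> i - 1) * d + \<beta> i"
  using decomp by blast

lemma Ec_carrier: "Ec \<in> carrier_mat N m"
  unfolding Ecal_def blk_start_def by simp

lemma Ec_index:
  "k < N \<Longrightarrow> j < m \<Longrightarrow> Ec $$ (k,j) = (if j = blk \<alpha> k then monom 1 (pos \<alpha> k * d) else 0)"
  unfolding Ecal_def blk_start_def by simp

lemma mat_act_Ec_carrier: "mat_act J Ec E \<in> carrier_mat N \<sigma>"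
  using mat_act_carrier[of J Ec E] Ec_carrier E by simp

lemma P_carrier: "P \<in> carrier_mat m m"
  using s_popov_interp_basis_carrier[OF P] E by simp

lemma P_row_interpolant: "i < m \<Longrightarrow> interpolant E J (row P i)"
  using P E unfolding s_popov_interp_basis_def interp_basis_def by auto

lemma P_coeffs:
  assumes "i < m" "j < m"
  shows "degree (P $$ (i,j)) \<le> dlt j" and "coeff (P $$ (i,j)) (dlt j) = (if i = j then 1 else 0)"
  using s_popov_column_coeffs[of s P i j] P P_carrier P_degrees assms
  unfolding s_popov_interp_basis_def by auto

lemma interpolant_expanded_iff:
  assumes "dim_vec q = N"
  shows "interpolant (mat_act J Ec E) J q \<longleftrightarrow> interpolant E J (collapse q)"
  using row_act_mat_act[OF J Ec_carrier E assms] assms E mat_act_Ec_carrier Ec_carrier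
  unfolding interpolant_def collapse_def by simp

lemma collapse_nth:
  assumes q: "dim_vec q = N" and j: "j < m"
  shows "collapse q $ j = (\<Sum>p<\<alpha> j. monom 1 (p * d) * q $ (blk_start \<alpha> j + p))"
proof -
  let ?B = "{blk_start \<alpha> j..<blk_start \<alpha> j + \<alpha> j}"
  have B: "?B \<subseteq> {..<N}" using blk_start_mono[of "Suc j" m \<alpha>] j by (auto simp: blk_start_Suc)
  have "collapse q $ j = (\<Sum>k<N. Ec $$ (k,j) * q $ k)"
    unfolding collapse_def by (rule index_transpose_mult_vec[OF Ec_carrier j q])
  also have "\<dots> = (\<Sum>k\<in>?B. Ec $$ (k,j) * q $ k)"
  proof (rule sum.mono_neutral_right[OF _ B])
    show "\<forall>k\<in>{..<N} - ?B. Ec $$ (k,j) * q $ k = 0"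
    proof
      fix k assume k: "k \<in> {..<N} - ?B"
      then have "blk \<alpha> k \<noteq> j"
        using blk_start_add_pos[of k \<alpha> m] pos_less[of k \<alpha> m] by force
      then show "Ec $$ (k,j) * q $ k = 0" using k j by (simp add: Ec_index)
    qed
  qed simp
  also have "\<dots> = (\<Sum>p<\<alpha> j. Ec $$ (blk_start \<alpha> j + p, j) * q $ (blk_start \<alpha> j + p))"
    using sum.shift_bounds_nat_ivl[of _ 0 "blk_start \<alpha> j" "\<alpha> j"]
    by (simp add: atLeast0LessThan add.commute)
  also have "\<dots> = (\<Sum>p<\<alpha> j. monom 1 (p * d) * q $ (blk_start \<alpha> j + p))"
    using j blk_start_add_less[of j m _ \<alpha>] by (intro sum.cong) (simp_all add: Ec_index blk_pos_blk_start_add)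
  finally show ?thesis .
qed

text \<open>When all entries of \<open>q\<close> have degree below \<open>d\<close>, the entries of block \<open>j\<close> are the
  base-\<open>X\<^sup>d\<close> digits of \<open>collapse q $ j\<close>.\<close>
lemma coeff_collapse_digits:
  assumes q: "dim_vec q = N" and j: "j < m"
    and digits: "\<And>k n. k < N \<Longrightarrow> d \<le> n \<Longrightarrow> coeff (q $ k) n = 0"
  shows "coeff (collapse q $ j) n
    = (if n div d < \<alpha> j then coeff (q $ (blk_start \<alpha> j + n div d)) (n mod d) else 0)"
proof -
  have d0: "0 < d" using d_pos by simp
  have summand: "coeff (monom 1 (p * d) * q $ (blk_start \<alpha> j + p)) n
      = (if p = n div d then coeff (q $ (blk_start \<alpha> j + n div d)) (n mod d) else 0)"
    if p: "p < \<alpha> j" for p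
  proof -
    have k: "blk_start \<alpha> j + p < N" using j p by (rule blk_start_add_less)
    consider "p < n div d" | "p = n div d" | "n div d < p" by linarith
    then show ?thesis
    proof cases
      case 1
      then have "Suc p * d \<le> n div d * d" by (intro mult_le_mono1) simp
      also have "\<dots> \<le> n" by (rule div_times_less_eq_dividend)
      finally have "d \<le> n - p * d" by simp
      then show ?thesis using 1 digits[OF k] by (simp add: coeff_monom_mult)
    next
      case 2
      have "\<not> n < n div d * d" by (simp add: not_less)
      then show ?thesis using 2 by (simp add: coeff_monom_mult minus_div_mult_eq_mod)
    next
      case 3
      then have "n < p * d" using div_less_iff_less_mult[OF d0] by simp
      then show ?thesis using 3 by (simp add: coeff_monom_mult)
    qed
  qed
  have "coeff (collapse q $ j) n
      = (\<Sum>p<\<alpha> j. if p = n div d then coeff (q $ (blk_start \<alpha> j + n div d)) (n mod d) else 0)"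
    unfolding collapse_nth[OF q j] coeff_sum using summand by (intro sum.cong) auto
  then show ?thesis by simp
qed

lemma
  assumes i: "i < m"
  shows block_last_less: "block_last i < N"
    and blk_block_last: "blk \<alpha> (block_last i) = i"
    and pos_block_last: "pos \<alpha> (block_last i) = \<alpha> i - 1"
proof -
  have a: "\<alpha> i - 1 < \<alpha> i" using decomp_at[OF i] by simp
  show "block_last i < N"
    unfolding block_last_def by (rule blk_start_add_less[of i m "\<alpha> i - 1" \<alpha>, OF i a])
  show "blk \<alpha> (block_last i) = i" "pos \<alpha> (block_last i) = \<alpha> i - 1"
    unfolding block_last_def by (rule blk_pos_blk_start_add[of "\<alpha> i - 1" \<alpha> i, OF a])+
qed

lemma block_last_eq_iff:
  assumes k: "k < N" and i: "i < m"
  shows "k = block_last i \<longleftrightarrow> blk \<alpha> k = i \<and> pos \<alpha> k = \<alpha> i - 1"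
  using blk_start_add_pos[OF k] blk_block_last[OF i] pos_block_last[OF i]
  unfolding block_last_def by auto

lemma sum_atMost_eq_block_last: "i < m \<Longrightarrow> (\<Sum>k\<le>i. \<alpha> k) - 1 = block_last i"
  using decomp_at[of i] by (simp add: block_last_def blk_start_def lessThan_Suc_atMost[symmetric])

lemma w_block_last: "i < m \<Longrightarrow> w (block_last i) = \<beta> i"
  unfolding dbar_def by (simp add: blk_block_last pos_block_last)

lemma w_not_last: "k < N \<Longrightarrow> k \<noteq> block_last (blk \<alpha> k) \<Longrightarrow> w k = d"
  using block_last_eq_iff[OF _ blk_less] unfolding dbar_def by auto

lemma w_le_d: "k < N \<Longrightarrow> w k \<le> d"
  using w_block_last[OF blk_less] w_not_last decomp_at[OF blk_less] by (metis order.refl less_imp_le)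

lemma coeff_collapse_ge_dlt:
  assumes q: "dim_vec q = N" and j: "j < m" and n: "dlt j \<le> n"
    and deg: "\<And>k. k < N \<Longrightarrow> degree (q $ k) \<le> w k"
    and digits: "\<And>k n. k < N \<Longrightarrow> d \<le> n \<Longrightarrow> coeff (q $ k) n = 0"
  shows "coeff (collapse q $ j) n = (if n = dlt j then coeff (q $ block_last j) (\<beta> j) else 0)"
proof -
  have d0: "0 < d" and dj: "dlt j = (\<alpha> j - 1) * d + \<beta> j" "\<beta> j < d" "1 \<le> \<alpha> j"
    using d_pos decomp_at[OF j] by auto
  have "\<alpha> j - 1 \<le> n div d"
    using n dj(1) by (metis add_leD1 div_le_mono div_mult_self_is_m[OF d0])
  then consider "n div d = \<alpha> j - 1" | "\<alpha> j \<le> n div d" by linarith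
  then show ?thesis
  proof cases
    case 1
    have nd: "n = (\<alpha> j - 1) * d + n mod d" using 1 by (metis div_mult_mod_eq)
    have "coeff (collapse q $ j) n = coeff (q $ (blk_start \<alpha> j + n div d)) (n mod d)"
      using 1 dj(3) by (simp add: coeff_collapse_digits[OF q j digits])
    also have "\<dots> = coeff (q $ block_last j) (n mod d)" using 1 by (simp add: block_last_def)
    also have "\<dots> = (if n = dlt j then coeff (q $ block_last j) (\<beta> j) else 0)"
    proof (cases "n = dlt j")
      case False
      then have "w (block_last j) < n mod d" using n nd dj w_block_last[OF j] by linarith
      then show ?thesis using False deg[OF block_last_less[OF j]] by (simp add: coeff_eq_0)
    qed (use nd dj in simp)
    finally show ?thesis .
  next
    case 2
    then have "\<alpha> j * d \<le> n" by (metis div_times_less_eq_dividend le_trans mult_le_mono1)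
    then have "n \<noteq> dlt j" using dj by (cases "\<alpha> j") auto
    then show ?thesis using 2 by (simp add: coeff_collapse_digits[OF q j digits])
  qed
qed

lemma expanded_interpolant_eq_0:
  assumes q: "interpolant (mat_act J Ec E) J q"
    and low: "\<And>k n. k < N \<Longrightarrow> w k \<le> n \<Longrightarrow> coeff (q $ k) n = 0"
  shows "q = 0\<^sub>v N"
proof -
  have dq: "dim_vec q = N" using q mat_act_Ec_carrier unfolding interpolant_def by simp
  have digits: "coeff (q $ k) n = 0" if "k < N" "d \<le> n" for k n
    using low w_le_d that by (meson le_trans)
  have deg: "degree (q $ k) \<le> w k" if "k < N" for k
    using low[OF that] by (meson degree_le le_less)
  have "collapse q = 0\<^sub>v (dim_row E)"
  proof (rule interpolant_eq_0_if_below_popov_degrees[OF P])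
    show "interpolant E J (collapse q)" using q interpolant_expanded_iff[OF dq] by simp
    fix j n assume j: "j < dim_row E" and n: "degree (P $$ (j,j)) \<le> n"
    then have "j < m" "dlt j \<le> n" using E P_degrees by auto
    then show "coeff (collapse q $ j) n = 0"
      using coeff_collapse_ge_dlt[OF dq _ _ deg digits] low[OF block_last_less] w_block_last by simp
  qed
  then have collapse0: "collapse q $ j = 0" if "j < m" for j using that E by simp
  have "coeff (q $ k) r = 0" if k: "k < N" for k r
  proof (cases "r < d")
    case True
    let ?j = "blk \<alpha> k" and ?n = "pos \<alpha> k * d + r"
    have "?n div d = pos \<alpha> k" "?n mod d = r" using True by auto
    then have "coeff (collapse q $ ?j) ?n = coeff (q $ k) r"
      using coeff_collapse_digits[OF dq blk_less[OF k] digits] pos_less[OF k] blk_start_add_pos[OF k]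
      by simp
    then show ?thesis using collapse0[OF blk_less[OF k]] by simp
  qed (use digits k in simp)
  then show ?thesis using dq by (intro eq_vecI) (simp_all add: poly_eq_iff)
qed

definition linearized_row :: "nat \<Rightarrow> 'a poly vec" where
  "linearized_row i = vec N (\<lambda>k. poly_cutoff d (poly_shift (pos \<alpha> k * d) (P $$ (i, blk \<alpha> k))))"

lemma coeff_linearized_row:
  "k < N \<Longrightarrow> coeff (linearized_row i $ k) n
    = (if n < d then coeff (P $$ (i, blk \<alpha> k)) (n + pos \<alpha> k * d) else 0)"
  by (simp add: linearized_row_def coeff_poly_cutoff coeff_poly_shift)

lemma collapse_linearized_row:
  assumes i: "i < m"
  shows "collapse (linearized_row i) = row P i"
proof (rule eq_vecI)
  fix j assume "j < dim_vec (row P i)"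
  then have j: "j < m" using P_carrier by simp
  have dq: "dim_vec (linearized_row i) = N" by (simp add: linearized_row_def)
  have digits: "\<And>k n. k < N \<Longrightarrow> d \<le> n \<Longrightarrow> coeff (linearized_row i $ k) n = 0"
    by (simp add: coeff_linearized_row)
  have "coeff (collapse (linearized_row i) $ j) n = coeff (P $$ (i,j)) n" for n
  proof (cases "n div d < \<alpha> j")
    case True
    let ?k = "blk_start \<alpha> j + n div d"
    have "?k < N" "blk \<alpha> ?k = j" "pos \<alpha> ?k = n div d"
      using blk_start_add_less[of j m "n div d" \<alpha>] blk_pos_blk_start_add[of "n div d" \<alpha> j] j True
      by auto
    then show ?thesis
      using True d_pos by (simp add: coeff_collapse_digits[OF dq j digits] coeff_linearized_row)
  next
    case False
    have "dlt j < \<alpha> j * d" using decomp_at[OF j] by (cases "\<alpha> j") auto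
    also have "\<dots> \<le> n" using False by (metis div_times_less_eq_dividend le_trans mult_le_mono1 not_less)
    finally have "degree (P $$ (i,j)) < n" using P_coeffs(1)[OF i j] by linarith
    then show ?thesis
      using False by (simp add: coeff_collapse_digits[OF dq j digits] coeff_eq_0)
  qed
  then show "collapse (linearized_row i) $ j = row P i $ j"
    using i j P_carrier by (simp add: poly_eq_iff)
qed (use P_carrier carrier_matD[OF Ec_carrier] in \<open>simp add: collapse_def\<close>)

lemma linearized_row_interpolant: "i < m \<Longrightarrow> interpolant (mat_act J Ec E) J (linearized_row i)"
  using interpolant_expanded_iff[of "linearized_row i"] collapse_linearized_row P_row_interpolant
  by (simp add: linearized_row_def)

lemma linearized_row_unit_leading:
  assumes i: "i < m"
  shows "unit_leading w (block_last i) (linearized_row i)"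
  unfolding unit_leading_def
proof (intro allI impI conjI)
  fix k assume "k < dim_vec (linearized_row i)"
  then have k: "k < N" by (simp add: linearized_row_def)
  let ?j = "blk \<alpha> k"
  have j: "?j < m" by (rule blk_less[OF k])
  have "degree (linearized_row i $ k) \<le> w k \<and>
      coeff (linearized_row i $ k) (w k) = (if k = block_last i then 1 else 0)"
  proof (cases "k = block_last ?j")
    case True
    then have pos: "pos \<alpha> k = \<alpha> ?j - 1" and wk: "w k = \<beta> ?j" and d: "\<beta> ?j < d"
      and dlt: "dlt ?j = \<beta> ?j + pos \<alpha> k * d"
      using pos_block_last[OF j] w_block_last[OF j] decomp_at[OF j] by auto
    have "coeff (linearized_row i $ k) n = 0" if "w k < n" for n
      using P_coeffs(1)[OF i j] that dlt wk by (simp add: coeff_linearized_row[OF k] coeff_eq_0)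
    then have "degree (linearized_row i $ k) \<le> w k" by (rule degree_le[rule_format])
    moreover have "(k = block_last i) = (i = ?j)"
      using True blk_block_last[OF i] by metis
    ultimately show ?thesis using P_coeffs(2)[OF i j] wk d dlt by (simp add: coeff_linearized_row[OF k])
  next
    case False
    then have wk: "w k = d" by (rule w_not_last[OF k])
    have "k \<noteq> block_last i" using False blk_block_last[OF i] by metis
    then show ?thesis
      using wk by (auto intro: degree_le simp: coeff_linearized_row[OF k])
  qed
  then show "degree (linearized_row i $ k) \<le> w k"
    and "coeff (linearized_row i $ k) (w k) = (if k = block_last i then 1 else 0)" by auto
qed

text \<open>Consecutive entries of a block carry consecutive powers of \<open>X\<^sup>d\<close> in \<open>collapse\<close>,
  so this vector collapses to zero.\<close>
definition carry_vec :: "nat \<Rightarrow> 'a poly vec" where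
  "carry_vec k = vec N (\<lambda>k'. if k' = k then monom 1 d else if k' = Suc k then -1 else 0)"

lemma
  assumes k: "k < N" and last: "k \<noteq> block_last (blk \<alpha> k)"
  shows Suc_not_last_less: "Suc k < N"
    and blk_Suc_not_last: "blk \<alpha> (Suc k) = blk \<alpha> k"
    and pos_Suc_not_last: "pos \<alpha> (Suc k) = Suc (pos \<alpha> k)"
proof -
  let ?i = "blk \<alpha> k"
  have i: "?i < m" by (rule blk_less[OF k])
  have "pos \<alpha> k \<noteq> \<alpha> ?i - 1" using block_last_eq_iff[OF k i] last by simp
  then have p: "Suc (pos \<alpha> k) < \<alpha> ?i" using pos_less[OF k] by linarith
  have Sk: "Suc k = blk_start \<alpha> ?i + Suc (pos \<alpha> k)" using blk_start_add_pos[OF k] by simp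
  show "Suc k < N" unfolding Sk by (rule blk_start_add_less[of ?i m _ \<alpha>, OF i p])
  show "blk \<alpha> (Suc k) = ?i" "pos \<alpha> (Suc k) = Suc (pos \<alpha> k)"
    unfolding Sk by (rule blk_pos_blk_start_add[of _ \<alpha> ?i, OF p])+
qed

lemma collapse_carry_vec:
  assumes k: "k < N" and last: "k \<noteq> block_last (blk \<alpha> k)"
  shows "collapse (carry_vec k) = 0\<^sub>v m"
proof (rule eq_vecI)
  fix j assume "j < dim_vec (0\<^sub>v m :: 'a poly vec)"
  then have j: "j < m" by simp
  note Sk = Suc_not_last_less[OF k last] blk_Suc_not_last[OF k last] pos_Suc_not_last[OF k last]
  have "collapse (carry_vec k) $ j = (\<Sum>k'<N. Ec $$ (k',j) * carry_vec k $ k')"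
    unfolding collapse_def by (rule index_transpose_mult_vec[OF Ec_carrier j]) (simp add: carry_vec_def)
  also have "\<dots> = (\<Sum>k'\<in>{k, Suc k}. Ec $$ (k',j) * carry_vec k $ k')"
    by (rule sum.mono_neutral_right) (use k Sk in \<open>auto simp: carry_vec_def\<close>)
  also have "\<dots> = Ec $$ (k,j) * monom 1 d - Ec $$ (Suc k,j)"
    using k Sk by (simp add: carry_vec_def)
  also have "\<dots> = 0"
    using k Sk j by (simp add: Ec_index mult_monom add.commute)
  finally show "collapse (carry_vec k) $ j = 0\<^sub>v m $ j" using j by simp
qed (use carrier_matD[OF Ec_carrier] in \<open>simp add: collapse_def\<close>)

lemma collapse_add:
  "dim_vec a = N \<Longrightarrow> dim_vec b = N \<Longrightarrow> collapse (a + b) = collapse a + collapse b"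
  unfolding collapse_def
  by (rule mult_add_distrib_mat_vec[OF transpose_carrier_mat[THEN iffD2, OF Ec_carrier] carrier_vecI carrier_vecI])

lemma carry_vec_interpolant:
  "k < N \<Longrightarrow> k \<noteq> block_last (blk \<alpha> k) \<Longrightarrow> interpolant (mat_act J Ec E) J (carry_vec k)"
  using interpolant_expanded_iff[of "carry_vec k"] collapse_carry_vec interpolant_0[OF J E]
  by (simp add: carry_vec_def)

lemma
  assumes k: "k < N" and last: "k \<noteq> block_last (blk \<alpha> k)" and j: "j < N"
  shows degree_carry_vec: "degree (carry_vec k $ j) \<le> w j"
    and coeff_carry_vec: "coeff (carry_vec k $ j) (w j)
      = (if j = k then 1 else if j = Suc k \<and> w (Suc k) = 0 then -1 else 0)"
  using j w_not_last[OF k last] by (auto simp: carry_vec_def degree_monom_eq coeff_monom)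

text \<open>The unit interpolants are the linearized rows of \<open>P\<close> at the last position of each
  block, and \<open>carry_vec k\<close> elsewhere, corrected by a linearized row when \<open>w (Suc k) = 0\<close>.\<close>
lemma exists_unit_leading_interpolant:
  assumes k: "k < N"
  shows "\<exists>q. dim_vec q = N \<and> interpolant (mat_act J Ec E) J q \<and> unit_leading w k q"
proof (cases "k = block_last (blk \<alpha> k)")
  case True
  then show ?thesis
    using linearized_row_interpolant linearized_row_unit_leading blk_less[OF k]
    by (metis dim_vec linearized_row_def)
next
  case not_last: False
  let ?i = "blk \<alpha> k" and ?g = "carry_vec k"
  have i: "?i < m" by (rule blk_less[OF k])
  have dg: "dim_vec ?g = N" by (simp add: carry_vec_def)
  have dl: "dim_vec (linearized_row ?i) = N" by (simp add: linearized_row_def)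
  note degree_g = degree_carry_vec[OF k not_last] and coeff_g = coeff_carry_vec[OF k not_last]
  show ?thesis
  proof (cases "w (Suc k) = 0")
    case False
    then have "unit_leading w k ?g" using dg degree_g coeff_g by (simp add: unit_leading_def)
    then show ?thesis using dg carry_vec_interpolant[OF k not_last] by blast
  next
    case True
    let ?q = "?g + linearized_row ?i"
    have dq: "dim_vec ?q = N" using dl by simp
    have "collapse ?q = row P ?i"
      using collapse_carry_vec[OF k not_last] collapse_linearized_row[OF i] collapse_add[OF dg dl]
        P_carrier i by simp
    then have "interpolant (mat_act J Ec E) J ?q"
      using interpolant_expanded_iff[OF dq] P_row_interpolant[OF i] by simp
    moreover have "Suc k = block_last ?i"
      using True w_not_last[OF Suc_not_last_less[OF k not_last]] d_pos blk_Suc_not_last[OF k not_last]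
      by fastforce
    then have "degree (linearized_row ?i $ j) \<le> w j \<and>
        coeff (linearized_row ?i $ j) (w j) = (if j = Suc k then 1 else 0)" if "j < N" for j
      using linearized_row_unit_leading[OF i] that dl unfolding unit_leading_def by auto
    then have "unit_leading w k ?q"
      using dq dg dl degree_add_le[OF degree_g] coeff_g True by (simp add: unit_leading_def)
    ultimately show ?thesis using dq by blast
  qed
qed

lemma unit_leading_block_last_digits:
  assumes i: "i < m" and q: "dim_vec q = N" and lead: "unit_leading w (block_last i) q"
    and k: "k < N" and n: "d \<le> n"
  shows "coeff (q $ k) n = 0"
proof -
  have lead_k: "degree (q $ k) \<le> w k" "coeff (q $ k) (w k) = (if k = block_last i then 1 else 0)"
    using lead q k unfolding unit_leading_def by auto
  show ?thesis
  proof (cases "k = block_last (blk \<alpha> k)")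
    case True
    have "w (block_last (blk \<alpha> k)) = \<beta> (blk \<alpha> k)" by (rule w_block_last[OF blk_less[OF k]])
    then have "w k < n" using decomp_at[OF blk_less[OF k]] n unfolding True[symmetric] by simp
    then show ?thesis using lead_k(1) by (simp add: coeff_eq_0)
  next
    case False
    have wk: "w k = d" by (rule w_not_last[OF k False])
    have "k \<noteq> block_last i" using False blk_block_last[OF i] by auto
    then show ?thesis
      using lead_k wk n by (cases "n = d") (auto simp: coeff_eq_0)
  qed
qed

lemma collapse_row_mult:
  assumes A: "A \<in> carrier_mat K N" and k: "k < K" and j: "j < m"
  shows "collapse (row A k) $ j = (A * Ec) $$ (k,j)"
  using A k j Ec_carrier unfolding collapse_def
  by (simp add: index_transpose_mult_vec scalar_prod_def atLeast0LessThan mult.commute)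

end

section \<open>The reduced basis of the linearized problem\<close>

locale partial_linearization_reduced = partial_linearization +
  fixes R :: "'a poly mat"
  assumes R: "s_minimal_interp_basis (mat_act J (Ecal m \<alpha> d) E) J (\<lambda>k. - int (dbar \<alpha> \<beta> d k)) R"
begin

abbreviation "L \<equiv> lm (\<lambda>k. - int (w k)) R"

definition row_deg :: "nat \<Rightarrow> nat" where
  "row_deg i = nat (rdeg (\<lambda>k. - int (w k)) (row R i))"

lemma R_basis: "interp_basis (mat_act J Ec E) J R"
  using R unfolding s_minimal_interp_basis_def by simp

lemma R_carrier: "R \<in> carrier_mat N N"
  using R_basis mat_act_Ec_carrier unfolding interp_basis_def by auto

lemma L_carrier: "L \<in> carrier_mat N N"
  using R_carrier unfolding lm_def by auto

lemma R_row_interpolant: "i < N \<Longrightarrow> interpolant (mat_act J Ec E) J (row R i)"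
  using R_basis mat_act_Ec_carrier unfolding interp_basis_def by auto

lemma R_row_nonzero:
  assumes i: "i < N"
  shows "row R i \<noteq> 0\<^sub>v N"
proof
  assume z: "row R i = 0\<^sub>v N"
  have "transpose_mat R *\<^sub>v unit_vec N i = 0\<^sub>v N"
  proof (rule eq_vecI)
    fix j assume "j < dim_vec (0\<^sub>v N :: 'a poly vec)"
    then have j: "j < N" by simp
    have "R $$ (i,j) = row R i $ j" using i j R_carrier by simp
    also have "\<dots> = 0" using z j by simp
    finally have Rij: "R $$ (i,j) = 0" .
    have "(transpose_mat R *\<^sub>v unit_vec N i) $ j = (\<Sum>i'<N. if i' = i then R $$ (i,j) else 0)"
      unfolding index_transpose_mult_vec[OF R_carrier j index_unit_vec(3)]
      by (rule sum.cong) (auto simp: unit_vec_def)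
    then show "(transpose_mat R *\<^sub>v unit_vec N i) $ j = 0\<^sub>v N $ j" using Rij j by simp
  qed (use R_carrier in simp)
  then have "unit_vec N i = (0\<^sub>v N :: 'a poly vec)"
    using R_basis mat_act_Ec_carrier unfolding interp_basis_def by auto
  then have "unit_vec N i $ i = (0\<^sub>v N :: 'a poly vec) $ i" by simp
  then show False using i by simp
qed

lemma rdeg_R_row_nonneg:
  assumes i: "i < N"
  shows "0 \<le> rdeg (\<lambda>k. - int (w k)) (row R i)"
proof -
  have "\<exists>k<N. \<exists>n\<ge>w k. coeff (row R i $ k) n \<noteq> 0"
  proof (rule ccontr)
    assume "\<not> ?thesis"
    then have "row R i = 0\<^sub>v N" by (intro expanded_interpolant_eq_0[OF R_row_interpolant[OF i]]) auto
    with R_row_nonzero[OF i] show False ..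
  qed
  then obtain k n where k: "k < N" "w k \<le> n" "coeff (row R i $ k) n \<noteq> 0" by blast
  then have "w k \<le> degree (row R i $ k)" using le_degree by fastforce
  moreover have "row R i $ k \<noteq> 0" using k(3) by auto
  then have "int (degree (row R i $ k)) - int (w k) \<le> rdeg (\<lambda>k. - int (w k)) (row R i)"
    using rdeg_ge[of k "row R i" "\<lambda>k. - int (w k)"] k(1) R_carrier by simp
  ultimately show ?thesis by linarith
qed

lemma degree_R_le: "i < N \<Longrightarrow> j < N \<Longrightarrow> degree (R $$ (i,j)) \<le> row_deg i + w j"
  using rdeg_ge[of j "row R i" "\<lambda>k. - int (w k)"] rdeg_R_row_nonneg[of i] R_carrier
  unfolding row_deg_def by (cases "R $$ (i,j) = 0") auto

lemma L_eq_leading_coeff_mat: "L = leading_coeff_mat row_deg w R"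
proof (rule eq_matI)
  fix i j assume "i < dim_row (leading_coeff_mat row_deg w R)" "j < dim_col (leading_coeff_mat row_deg w R)"
  then have i: "i < N" and j: "j < N" using R_carrier by (auto simp: leading_coeff_mat_def)
  have r0: "0 \<le> rdeg (\<lambda>k. - int (w k)) (row R i)" by (rule rdeg_R_row_nonneg[OF i])
  then have "nat (rdeg (\<lambda>k. - int (w k)) (row R i) + int (w j)) = row_deg i + w j"
    unfolding row_deg_def by (simp add: nat_add_distrib)
  then show "L $$ (i,j) = leading_coeff_mat row_deg w R $$ (i,j)"
    using i j r0 R_carrier by (simp add: lm_index leading_coeff_mat_def)
qed (use R_carrier in \<open>simp_all add: lm_def leading_coeff_mat_def\<close>)

text \<open>The unit interpolant for \<open>k\<close> is some \<open>u R\<close>; by the predictable degree property its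
  \<open>(-w)\<close>-degree \<open>0\<close> confines the leading coefficients \<open>c\<close> of \<open>u\<close> to rows of degree \<open>0\<close>,
  and its leading vector \<open>e\<^sub>k\<close> is \<open>c L\<close>.\<close>
lemma unit_vec_in_degree_0_rows:
  assumes k: "k < N"
  shows "\<exists>c. dim_vec c = N \<and> (\<forall>i<N. c $ i \<noteq> 0 \<longrightarrow> row_deg i = 0) \<and>
    transpose_mat L *\<^sub>v c = unit_vec N k"
proof -
  obtain q where q: "dim_vec q = N" "interpolant (mat_act J Ec E) J q" "unit_leading w k q"
    using exists_unit_leading_interpolant[OF k] by blast
  obtain u where u: "dim_vec u = N" "q = transpose_mat R *\<^sub>v u"
    using q(2) R_basis mat_act_Ec_carrier unfolding interp_basis_def by force
  have u0: "u \<noteq> 0\<^sub>v N"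
  proof
    assume "u = 0\<^sub>v N"
    then have "q $ k = 0" using k R_carrier by (simp add: u(2) index_transpose_mult_vec)
    moreover have "coeff (q $ k) (w k) = 1" using q(1,3) k unfolding unit_leading_def by simp
    ultimately show False by simp
  qed
  show ?thesis
  proof (rule leading_coeffs_transpose_mult_vec[OF R_carrier u(1) u0 degree_R_le])
    fix t c assume c: "dim_vec c = N" "c \<noteq> 0\<^sub>v N" "\<And>i. i < N \<Longrightarrow> c $ i \<noteq> 0 \<Longrightarrow> row_deg i \<le> t"
      and lead: "\<And>j. j < N \<Longrightarrow> coeff ((transpose_mat R *\<^sub>v u) $ j) (t + w j)
          = (transpose_mat (leading_coeff_mat row_deg w R) *\<^sub>v c) $ j"
    have Lc: "transpose_mat L *\<^sub>v c \<noteq> 0\<^sub>v N"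
      using R c(1,2) L_carrier unfolding s_minimal_interp_basis_def s_reduced_def full_row_rank_def
      by auto
    then obtain j where j: "j < N" "(transpose_mat L *\<^sub>v c) $ j \<noteq> 0"
      using vec_nonzero_index L_carrier by (metis carrier_matD(2) dim_mult_mat_vec index_transpose_mat(2))
    then have "t + w j \<le> degree (q $ j)"
      using lead[OF j(1)] le_degree u(2) L_eq_leading_coeff_mat by metis
    then have t0: "t = 0" using q(1,3) j(1) unfolding unit_leading_def by fastforce
    have "transpose_mat L *\<^sub>v c = unit_vec N k"
    proof (rule eq_vecI)
      fix j assume "j < dim_vec (unit_vec N k :: 'a vec)"
      then have j: "j < N" by simp
      have "(transpose_mat L *\<^sub>v c) $ j = coeff (q $ j) (w j)"
        using lead[OF j] t0 u(2) L_eq_leading_coeff_mat by simp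
      then show "(transpose_mat L *\<^sub>v c) $ j = unit_vec N k $ j"
        using q(1,3) j k unfolding unit_leading_def by (simp add: unit_vec_def)
    qed (use L_carrier in simp)
    then show ?thesis using c t0 by auto
  qed
qed

lemma L_left_inverse:
  "\<exists>C \<in> carrier_mat N N. C * L = 1\<^sub>m N \<and> (\<forall>k<N. \<forall>i<N. C $$ (k,i) \<noteq> 0 \<longrightarrow> row_deg i = 0)"
proof -
  have "\<forall>k\<in>{..<N}. \<exists>c. dim_vec c = N \<and> (\<forall>i<N. c $ i \<noteq> 0 \<longrightarrow> row_deg i = 0) \<and>
      transpose_mat L *\<^sub>v c = unit_vec N k"
    using unit_vec_in_degree_0_rows by blast
  then obtain cf where cf: "\<And>k. k < N \<Longrightarrow> dim_vec (cf k) = N \<and>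
      (\<forall>i<N. cf k $ i \<noteq> 0 \<longrightarrow> row_deg i = 0) \<and> transpose_mat L *\<^sub>v cf k = unit_vec N k"
    by (metis bchoice lessThan_iff)
  define C where "C = mat N N (\<lambda>(k,i). cf k $ i)"
  have "C * L = 1\<^sub>m N"
  proof (rule eq_matI)
    fix k j assume "k < dim_row (1\<^sub>m N :: 'a mat)" "j < dim_col (1\<^sub>m N :: 'a mat)"
    then have k: "k < N" and j: "j < N" by auto
    have "(C * L) $$ (k,j) = (\<Sum>i<N. L $$ (i,j) * cf k $ i)"
      using k j L_carrier by (simp add: C_def scalar_prod_def atLeast0LessThan mult.commute)
    also have "\<dots> = (transpose_mat L *\<^sub>v cf k) $ j"
      using cf[OF k] by (rule index_transpose_mult_vec[OF L_carrier j, symmetric, OF conjunct1])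
    finally show "(C * L) $$ (k,j) = 1\<^sub>m N $$ (k,j)" using cf[OF k] k j by simp
  qed (use L_carrier in \<open>simp_all add: C_def\<close>)
  then show ?thesis using cf by (intro bexI[of _ C]) (auto simp: C_def)
qed

text \<open>Each diagonal entry of \<open>L C = 1\<close> needs some \<open>C\<^sub>k\<^sub>i \<noteq> 0\<close>: the \<open>(-w)\<close>-minimal degree of
  the linearized problem is \<open>0\<close>.\<close>
lemma row_deg_eq_0:
  assumes i: "i < N"
  shows "row_deg i = 0"
proof -
  obtain C where C: "C \<in> carrier_mat N N" "C * L = 1\<^sub>m N"
    and supp: "\<And>k i. k < N \<Longrightarrow> i < N \<Longrightarrow> C $$ (k,i) \<noteq> 0 \<Longrightarrow> row_deg i = 0"
    using L_left_inverse by blast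
  have "L * C = 1\<^sub>m N" by (rule mat_mult_left_right_inverse[OF C(1) L_carrier C(2)])
  moreover have "(L * C) $$ (i,i) = (\<Sum>k<N. L $$ (i,k) * C $$ (k,i))"
    using i C(1) L_carrier by (simp add: scalar_prod_def atLeast0LessThan)
  ultimately have "(\<Sum>k<N. L $$ (i,k) * C $$ (k,i)) \<noteq> 0" using i by simp
  then obtain k where "k < N" "C $$ (k,i) \<noteq> 0"
    by (metis (no_types, lifting) lessThan_iff mult_zero_right sum.neutral)
  then show ?thesis using supp i by blast
qed

lemma L_inverse: "the (mat_inverse L) \<in> carrier_mat N N" "the (mat_inverse L) * L = 1\<^sub>m N"
proof -
  obtain C where C: "C \<in> carrier_mat N N" "C * L = 1\<^sub>m N" using L_left_inverse by blast
  then have "det C * det L = 1" using det_mult[OF C(1) L_carrier] by simp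
  then have "det L \<noteq> 0" by auto
  then have "L \<in> Units (ring_mat TYPE('a) N undefined)" by (rule det_non_zero_imp_unit[OF L_carrier])
  then obtain C' where "mat_inverse L = Some C'"
    using mat_inverse(1)[OF L_carrier, of undefined] by (cases "mat_inverse L") auto
  then show "the (mat_inverse L) \<in> carrier_mat N N" "the (mat_inverse L) * L = 1\<^sub>m N"
    using mat_inverse(2)[OF L_carrier] by auto
qed

definition Q :: "'a poly mat" where
  "Q = map_mat (\<lambda>c. [:c:]) (the (mat_inverse L)) * R"

lemma Q_carrier: "Q \<in> carrier_mat N N"
  unfolding Q_def using L_inverse(1) R_carrier by auto

lemma Q_index:
  "k < N \<Longrightarrow> j < N \<Longrightarrow> Q $$ (k,j) = (\<Sum>i<N. R $$ (i,j) * [:the (mat_inverse L) $$ (k,i):])"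
  unfolding Q_def using L_inverse(1) R_carrier
  by (simp add: scalar_prod_def atLeast0LessThan mult.commute)

lemma Q_row_interpolant:
  assumes k: "k < N"
  shows "interpolant (mat_act J Ec E) J (row Q k)"
proof -
  let ?u = "vec N (\<lambda>i. [:the (mat_inverse L) $$ (k,i):])"
  have "row Q k = transpose_mat R *\<^sub>v ?u"
  proof (rule eq_vecI)
    fix j assume "j < dim_vec (transpose_mat R *\<^sub>v ?u)"
    then have j: "j < N" using R_carrier by simp
    have "(transpose_mat R *\<^sub>v ?u) $ j = (\<Sum>i<N. R $$ (i,j) * ?u $ i)"
      by (rule index_transpose_mult_vec[OF R_carrier j]) simp
    also have "\<dots> = Q $$ (k,j)" unfolding Q_index[OF k j] by (rule sum.cong) simp_all
    finally show "row Q k $ j = (transpose_mat R *\<^sub>v ?u) $ j" using k j Q_carrier by simp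
  qed (use Q_carrier R_carrier in simp)
  then have "row_act J (row Q k) (mat_act J Ec E) = row_act J ?u (mat_act J R (mat_act J Ec E))"
    using row_act_mat_act[OF J R_carrier mat_act_Ec_carrier] by simp
  also have "\<dots> = 0\<^sub>v (dim_col (mat_act J Ec E))"
    by (rule row_act_mat_act_eq_0) (use R_row_interpolant R_carrier in \<open>auto simp: interpolant_def\<close>)
  finally show ?thesis unfolding interpolant_def using Q_carrier mat_act_Ec_carrier by simp
qed

lemma Q_row_unit_leading:
  assumes k: "k < N"
  shows "unit_leading w k (row Q k)"
  unfolding unit_leading_def
proof (intro allI impI conjI)
  fix j assume "j < dim_vec (row Q k)"
  then have j: "j < N" using Q_carrier by simp
  have Qkj: "row Q k $ j = (\<Sum>i<N. R $$ (i,j) * [:the (mat_inverse L) $$ (k,i):])"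
    using k j Q_carrier by (simp add: Q_index)
  have degR: "degree (R $$ (i,j)) \<le> w j" if "i < N" for i
    using degree_R_le[OF that j] row_deg_eq_0[OF that] by simp
  show "degree (row Q k $ j) \<le> w j"
    unfolding Qkj by (rule degree_sum_le) (use degR degree_mult_le in \<open>fastforce+\<close>)
  have "coeff (row Q k $ j) (w j) = (\<Sum>i<N. the (mat_inverse L) $$ (k,i) * L $$ (i,j))"
    unfolding Qkj coeff_sum L_eq_leading_coeff_mat
    using j R_carrier row_deg_eq_0 by (intro sum.cong) (simp_all add: leading_coeff_mat_def)
  also have "\<dots> = (the (mat_inverse L) * L) $$ (k,j)"
    using k j L_inverse(1) L_carrier by (simp add: scalar_prod_def atLeast0LessThan)
  finally show "coeff (row Q k $ j) (w j) = (if j = k then 1 else 0)"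
    using L_inverse(2) k j by simp
qed

lemma selected_rows_eq_P: "mat m m (\<lambda>(i,j). (Q * Ec) $$ (block_last i, j)) = P"
proof (rule s_popov_interp_basis_eqI[OF E J P])
  let ?S = "mat m m (\<lambda>(i,j). (Q * Ec) $$ (block_last i, j))"
  have row_S: "row ?S i = collapse (row Q (block_last i))" if i: "i < m" for i
    using i block_last_less[OF i] collapse_row_mult[OF Q_carrier] Ec_carrier
    by (intro eq_vecI) (simp_all add: collapse_def)
  show "?S \<in> carrier_mat m m" by simp
  show "interpolant E J (row ?S i)" if "i < m" for i
    using interpolant_expanded_iff Q_row_interpolant[OF block_last_less[OF that]] Q_carrier
    unfolding row_S[OF that] by simp
  fix i j n assume i: "i < m" and j: "j < m" and n: "degree (P $$ (j,j)) \<le> n"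
  let ?q = "row Q (block_last i)"
  have dq: "dim_vec ?q = N" using Q_carrier by simp
  have lead: "unit_leading w (block_last i) ?q" by (rule Q_row_unit_leading[OF block_last_less[OF i]])
  have deg: "degree (?q $ k) \<le> w k" if "k < N" for k
    using lead that dq unfolding unit_leading_def by simp
  have "?S $$ (i,j) = collapse ?q $ j"
    using i j collapse_row_mult[OF Q_carrier block_last_less[OF i] j] by simp
  moreover have "coeff (collapse ?q $ j) n = (if n = dlt j then coeff (?q $ block_last j) (\<beta> j) else 0)"
    using n P_degrees j coeff_collapse_ge_dlt[OF dq j _ deg unit_leading_block_last_digits[OF i dq lead]]
    by simp
  moreover have "coeff (?q $ block_last j) (\<beta> j) = (if i = j then 1 else 0)"
    using lead dq block_last_less[OF j] w_block_last[OF j] blk_block_last i j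
    unfolding unit_leading_def by metis
  ultimately show "coeff (?S $$ (i,j)) n = (if n = degree (P $$ (j,j)) \<and> i = j then 1 else 0)"
    using P_degrees j by auto
qed

end

theorem lemma4p2:
  fixes E J :: "'a::field mat" and s :: "nat \<Rightarrow> int"
    and dlt \<alpha> \<beta> :: "nat \<Rightarrow> nat" and m \<sigma> d :: nat and R :: "'a poly mat"
  assumes E: "E \<in> carrier_mat m \<sigma>" and J: "J \<in> carrier_mat \<sigma> \<sigma>"
    and mindeg: "s_minimal_degree E J s dlt"
    and d_def: "d = nat \<lceil>real \<sigma> / real m\<rceil>" and d_pos: "d \<ge> 1"
    and decomp: "\<forall>i<m. 1 \<le> \<alpha> i \<and> \<beta> i < d \<and> dlt i = (\<alpha> i - 1) * d + \<beta> i"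
    and R: "s_minimal_interp_basis (mat_act J (Ecal m \<alpha> d) E) J
              (\<lambda>k. - int (dbar \<alpha> \<beta> d k)) R"
  shows "s_popov_interp_basis E J s
    (let T = map_mat (\<lambda>c. [:c:]) (the (mat_inverse (lm (\<lambda>k. - int (dbar \<alpha> \<beta> d k)) R)))
             * R * Ecal m \<alpha> d
     in mat m m (\<lambda>(i,j). T $$ ((\<Sum>k\<le>i. \<alpha> k) - 1, j)))"
proof -
  obtain P where P: "s_popov_interp_basis E J s P" "\<forall>i<m. dlt i = degree (P $$ (i,i))"
    using mindeg E unfolding s_minimal_degree_def by auto
  interpret partial_linearization_reduced E J s dlt \<alpha> \<beta> m \<sigma> d P R
    by unfold_locales (use E J d_pos decomp P R in auto)
  have "(let T = map_mat (\<lambda>c. [:c:]) (the (mat_inverse L)) * R * Ec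
      in mat m m (\<lambda>(i,j). T $$ ((\<Sum>k\<le>i. \<alpha> k) - 1, j)))
      = mat m m (\<lambda>(i,j). (Q * Ec) $$ (block_last i, j))"
    by (intro eq_matI) (simp_all add: Let_def Q_def sum_atMost_eq_block_last[unfolded One_nat_def])
  then show ?thesis using selected_rows_eq_P P(1) by simp
qed
end
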